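(* Let $\mathcal{SB}=\langle\mathcal{L},A,\to,\text{supp}\rangle$ be an SBAF and $S\subseteq Sent(A)$ a compatible set of sentences. Then $Arg_w(S)$ is admissible.
   Context: A language is a triple $\mathcal{L}=\langle L,\overline{\cdot},n\rangle$: $L$ is a nonempty set of sentences; $\overline{\cdot}$ assigns to each $s\in L$ a set $\overline{s}\subseteq L$ of sentences incompatible with $s$, and is symmetric; $n$ is a partial naming function assigning to an argument $a$ a sentence $n(a)\in L$ (if undefined, put $\overline{n(a)}:=\emptyset$), with $\overline{n(\langle\{t\},t\rangle)}=\emptyset$. An argument is a pair $a=\langle Prem(a),Conc(a)\rangle$ with $Prem(a)$ a nonempty finite subset of $L$ and $Conc(a)\in L$; $Sent(a):=Prem(a)\cup\{Conc(a)\}$, $Sent(E):=\bigcup_{a\in E}Sent(a)$. Argument $a$ attacks $b$ ($a\to b$) if $Conc(a)\in\overline{s}$ for some $s\in Sent(b)$ or $Conc(a)\in\overline{n(b)}$. An SBAF is $\langle\mathcal{L},A,\to,\text{supp}\rangle$ with $A$ a finite set of arguments. For $E\subseteq A$: $E$ defends $a\in A$ if for every $b\in A$ with $b\to a$ some element of $E$ attacks $b$; $E$ is conflict-free if no $a,b\in E$ with $a\to b$; admissible if conflict-free and defends all its elements. $S$ is compatible if no $s,t\in S$ with $s\in\overline t$. $Arg_s(S):=\{a\in A\mid Prem(a)\subseteq S\text{ and }\overline{n(a)}\cap S=\emptyset\}$; $R^S(E):=\{a\in A\mid a\in Arg_s(S)\text{ and }E\text{ defends }a\}$. For compatible $S$,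 $Init(S)$ is the largest admissible subset of $\{a\in A\mid Sent(a)\subseteq S\text{ and }\overline{n(a)}\cap S=\emptyset\}$, and the weak argument set $Arg_w(S)$ is the $\subseteq$-least set $E\subseteq A$ with $Init(S)\subseteq E$ and $R^S(E)=E$. *)

theory Defs
  imports Main
begin

text \<open>A language is given by a carrier L, the incompatibility map ov (s \<mapsto> \<bar>s\<bar>),
  and a partial naming function nm (None = undefined).\<close>

type_synonym 's argument = "'s set \<times> 's"

definition Prem :: "'s argument \<Rightarrow> 's set" where "Prem a = fst a"
definition Conc :: "'s argument \<Rightarrow> 's" where "Conc a = snd a"
definition Sent :: "'s argument \<Rightarrow> 's set" where "Sent a = Prem a \<union> {Conc a}"
definition SentS :: "'s argument set \<Rightarrow> 's set" where "SentS E = (\<Union>a\<in>E. Sent a)"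

definition nov :: "('s \<Rightarrow> 's set) \<Rightarrow> ('s argument \<Rightarrow> 's option) \<Rightarrow> 's argument \<Rightarrow> 's set" where
  "nov ov nm a = (case nm a of None \<Rightarrow> {} | Some s \<Rightarrow> ov s)"

definition language :: "'s set \<Rightarrow> ('s \<Rightarrow> 's set) \<Rightarrow> ('s argument \<Rightarrow> 's option) \<Rightarrow> bool" where
  "language L ov nm \<longleftrightarrow>
     L \<noteq> {} \<and>
     (\<forall>s\<in>L. ov s \<subseteq> L) \<and>
     (\<forall>s\<in>L. \<forall>t\<in>L. s \<in> ov t \<longleftrightarrow> t \<in> ov s) \<and>
     (\<forall>a s. nm a = Some s \<longrightarrow> s \<in> L) \<and>
     (\<forall>t\<in>L. nov ov nm ({t}, t) = {})"

definition is_argument :: "'s set \<Rightarrow> 's argument \<Rightarrow> bool" where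
  "is_argument L a \<longleftrightarrow> Prem a \<noteq> {} \<and> finite (Prem a) \<and> Prem a \<subseteq> L \<and> Conc a \<in> L"

definition attacks :: "('s \<Rightarrow> 's set) \<Rightarrow> ('s argument \<Rightarrow> 's option) \<Rightarrow> 's argument \<Rightarrow> 's argument \<Rightarrow> bool" where
  "attacks ov nm a b \<longleftrightarrow> (\<exists>s\<in>Sent b. Conc a \<in> ov s) \<or> Conc a \<in> nov ov nm b"

text \<open>An SBAF (the support relation plays no role in the notions below and is omitted).\<close>
definition sbaf :: "'s set \<Rightarrow> ('s \<Rightarrow> 's set) \<Rightarrow> ('s argument \<Rightarrow> 's option) \<Rightarrow> 's argument set \<Rightarrow> bool" where
  "sbaf L ov nm A \<longleftrightarrow> language L ov nm \<and> finite A \<and> (\<forall>a\<in>A. is_argument L a)"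

definition defends where
  "defends ov nm A E a \<longleftrightarrow> (\<forall>b\<in>A. attacks ov nm b a \<longrightarrow> (\<exists>c\<in>E. attacks ov nm c b))"

definition conflict_free where
  "conflict_free ov nm E \<longleftrightarrow> \<not> (\<exists>a\<in>E. \<exists>b\<in>E. attacks ov nm a b)"

definition admissible where
  "admissible ov nm A E \<longleftrightarrow> E \<subseteq> A \<and> conflict_free ov nm E \<and> (\<forall>a\<in>E. defends ov nm A E a)"

definition compatible :: "('s \<Rightarrow> 's set) \<Rightarrow> 's set \<Rightarrow> bool" where
  "compatible ov S \<longleftrightarrow> \<not> (\<exists>s\<in>S. \<exists>t\<in>S. s \<in> ov t)"

definition Arg_s where
  "Arg_s ov nm A S = {a\<in>A. Prem a \<subseteq> S \<and> nov ov nm a \<inter> S = {}}"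

definition R_S where
  "R_S ov nm A S E = {a\<in>A. a \<in> Arg_s ov nm A S \<and> defends ov nm A E a}"

definition Init_cands where
  "Init_cands ov nm A S = {a\<in>A. Sent a \<subseteq> S \<and> nov ov nm a \<inter> S = {}}"

definition Init where
  "Init ov nm A S = (THE E. E \<subseteq> Init_cands ov nm A S \<and> admissible ov nm A E \<and>
      (\<forall>E'. E' \<subseteq> Init_cands ov nm A S \<and> admissible ov nm A E' \<longrightarrow> E' \<subseteq> E))"

definition Arg_w where
  "Arg_w ov nm A S = (THE E. E \<subseteq> A \<and> Init ov nm A S \<subseteq> E \<and> R_S ov nm A S E = E \<and>
      (\<forall>E'. E' \<subseteq> A \<and> Init ov nm A S \<subseteq> E' \<and> R_S ov nm A S E' = E' \<longrightarrow> E \<subseteq> E'))"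

end

theory Submission
  imports Defs
begin

text \<open>R^S is monotone, and it sends an admissible set E with E \<subseteq> R^S(E) to an admissible set with
  the same property. Init(S) is such a set: since S is compatible, the candidates for Init(S) are
  conflict-free, so the union of their admissible subsets is admissible and is the largest one.
  As A is finite, the increasing iteration of R^S from Init(S) becomes stationary, and its limit is
  the least fixpoint of R^S above Init(S), i.e. Arg_w(S); hence Arg_w(S) is admissible.\<close>

lemma funpow_subset_step:
  fixes f :: "'a set \<Rightarrow> 'a set"
  assumes "mono f" and "I \<subseteq> f I"
  shows "(f ^^ k) I \<subseteq> f ((f ^^ k) I)"
  using funpow_mono2[OF assms(1) le_SucI[OF order.refl] order.refl assms(2), of k] by simp

lemma funpow_stabilizes:
  fixes f :: "'a set \<Rightarrow> 'a set"
  assumes "mono f" and "finite A" and "\<And>E. f E \<subseteq> A" and "I \<subseteq> f I"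
  obtains k where "f ((f ^^ k) I) = (f ^^ k) I"
proof -
  let ?X = "\<lambda>k. (f ^^ k) I"
  have "\<not> strict_mono ?X"
  proof
    assume "strict_mono ?X"
    then have "infinite (range ?X)"
      using finite_imageD strict_mono_imp_inj_on infinite_UNIV_nat by blast
    moreover have "?X k \<subseteq> A" for k
      using assms(3,4) by (cases k) auto
    ultimately show False
      using finite_subset[of "range ?X" "Pow A"] assms(2) by blast
  qed
  then obtain k where "\<not> ?X k \<subset> f (?X k)"
    unfolding strict_mono_Suc_iff by auto
  with funpow_subset_step[OF assms(1,4)] that show thesis
    by blast
qed

lemma funpow_subset_fixpoint:
  fixes f :: "'a set \<Rightarrow> 'a set"
  assumes "mono f" and "I \<subseteq> E" and "f E = E"
  shows "(f ^^ k) I \<subseteq> E"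
proof (induction k)
  case (Suc k)
  then show ?case
    using monoD[OF assms(1) Suc] assms(3) by simp
qed (use assms(2) in simp)

lemma the_least_fixpoint_above_eq_funpow:
  fixes f :: "'a set \<Rightarrow> 'a set"
  assumes "mono f" and "finite A" and "\<And>E. f E \<subseteq> A" and "I \<subseteq> f I"
  obtains k where
    "(THE E. E \<subseteq> A \<and> I \<subseteq> E \<and> f E = E \<and>
        (\<forall>E'. E' \<subseteq> A \<and> I \<subseteq> E' \<and> f E' = E' \<longrightarrow> E \<subseteq> E')) = (f ^^ k) I"
proof -
  obtain k where fix_k: "f ((f ^^ k) I) = (f ^^ k) I"
    using funpow_stabilizes[OF assms] .
  let ?F = "(f ^^ k) I"
  have F: "?F \<subseteq> A" "I \<subseteq> ?F"
    using assms(3)[of ?F] fix_k funpow_mono2[OF assms(1) le0 order.refl assms(4), of k] by simp_all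
  have least: "?F \<subseteq> E" if "I \<subseteq> E" "f E = E" for E
    using funpow_subset_fixpoint[OF assms(1) that] .
  show thesis
  proof (rule that, rule the_equality)
    show "?F \<subseteq> A \<and> I \<subseteq> ?F \<and> f ?F = ?F \<and>
        (\<forall>E'. E' \<subseteq> A \<and> I \<subseteq> E' \<and> f E' = E' \<longrightarrow> ?F \<subseteq> E')"
      using F fix_k least by blast
    show "E = ?F" if "E \<subseteq> A \<and> I \<subseteq> E \<and> f E = E \<and>
        (\<forall>E'. E' \<subseteq> A \<and> I \<subseteq> E' \<and> f E' = E' \<longrightarrow> E \<subseteq> E')" for E
      using that F fix_k least by (meson subset_antisym)
  qed
qed

lemma defends_mono: "defends ov nm A E a \<Longrightarrow> E \<subseteq> E' \<Longrightarrow> defends ov nm A E' a"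
  unfolding defends_def by blast

lemma mono_R_S: "mono (R_S ov nm A S)"
  unfolding R_S_def by (rule monoI) (use defends_mono in blast)

lemma R_S_subset: "R_S ov nm A S E \<subseteq> A"
  unfolding R_S_def by blast

lemma conflict_free_subset: "conflict_free ov nm E \<Longrightarrow> E' \<subseteq> E \<Longrightarrow> conflict_free ov nm E'"
  unfolding conflict_free_def by blast

text \<open>Conflict-freeness of R^S(E): an attack a \<rightarrow> b inside R^S(E) is answered by some c \<in> E
  attacking a, and c is in turn attacked from E because E defends a.\<close>

lemma admissible_R_S:
  assumes adm: "admissible ov nm A E" and sub: "E \<subseteq> R_S ov nm A S E"
  shows "admissible ov nm A (R_S ov nm A S E)"
proof -
  have "\<not> attacks ov nm a b" if a: "a \<in> R_S ov nm A S E" and b: "b \<in> R_S ov nm A S E" for a b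
  proof
    assume "attacks ov nm a b"
    then obtain c where c: "c \<in> E" "attacks ov nm c a"
      using a b unfolding R_S_def defends_def by blast
    then obtain d where "d \<in> E" "attacks ov nm d c"
      using a adm unfolding R_S_def defends_def admissible_def by blast
    with c adm show False
      unfolding admissible_def conflict_free_def by blast
  qed
  moreover have "defends ov nm A (R_S ov nm A S E) a" if "a \<in> R_S ov nm A S E" for a
    using that sub defends_mono unfolding R_S_def by blast
  ultimately show ?thesis
    unfolding admissible_def conflict_free_def using R_S_subset by blast
qed

lemma admissible_funpow_R_S:
  assumes "admissible ov nm A E" and "E \<subseteq> R_S ov nm A S E"
  shows "admissible ov nm A ((R_S ov nm A S ^^ k) E)"
proof (induction k)
  case (Suc k)
  then show ?case
    using admissible_R_S[OF Suc funpow_subset_step[OF mono_R_S assms(2)]] by simp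
qed (use assms(1) in simp)

lemma conflict_free_Init_cands:
  assumes "compatible ov S"
  shows "conflict_free ov nm (Init_cands ov nm A S)"
  using assms unfolding conflict_free_def attacks_def Init_cands_def compatible_def Sent_def
  by blast

lemma admissible_Union:
  assumes "\<And>E. E \<in> \<E> \<Longrightarrow> admissible ov nm A E" and "conflict_free ov nm (\<Union>\<E>)"
  shows "admissible ov nm A (\<Union>\<E>)"
  unfolding admissible_def
proof (intro conjI ballI)
  show "\<Union>\<E> \<subseteq> A"
    using assms(1) unfolding admissible_def by blast
  show "defends ov nm A (\<Union>\<E>) a" if "a \<in> \<Union>\<E>" for a
    using that assms(1) defends_mono[of ov nm A _ a "\<Union>\<E>"] unfolding admissible_def by blast
qed (rule assms(2))

lemma admissible_Union_admissible_subsets: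
  assumes "conflict_free ov nm C"
  shows "admissible ov nm A (\<Union>{E. E \<subseteq> C \<and> admissible ov nm A E})"
proof (rule admissible_Union)
  have "\<Union>{E. E \<subseteq> C \<and> admissible ov nm A E} \<subseteq> C"
    by blast
  then show "conflict_free ov nm (\<Union>{E. E \<subseteq> C \<and> admissible ov nm A E})"
    by (rule conflict_free_subset[OF assms])
qed simp

lemma Init_eq_Union:
  assumes "compatible ov S"
  shows "Init ov nm A S = \<Union>{E. E \<subseteq> Init_cands ov nm A S \<and> admissible ov nm A E}"
    (is "_ = ?U")
  unfolding Init_def
proof (rule the_equality)
  let ?C = "Init_cands ov nm A S"
  have U: "?U \<subseteq> ?C" "admissible ov nm A ?U"
    using admissible_Union_admissible_subsets[OF conflict_free_Init_cands[OF assms]] by auto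
  have largest: "\<forall>E'. E' \<subseteq> ?C \<and> admissible ov nm A E' \<longrightarrow> E' \<subseteq> ?U"
    by blast
  show "?U \<subseteq> ?C \<and> admissible ov nm A ?U \<and> (\<forall>E'. E' \<subseteq> ?C \<and> admissible ov nm A E' \<longrightarrow> E' \<subseteq> ?U)"
    using U largest by blast
  show "E = ?U" if "E \<subseteq> ?C \<and> admissible ov nm A E \<and>
      (\<forall>E'. E' \<subseteq> ?C \<and> admissible ov nm A E' \<longrightarrow> E' \<subseteq> E)" for E
  proof (rule subset_antisym)
    show "E \<subseteq> ?U"
      using that largest by blast
    show "?U \<subseteq> E"
      using that U by blast
  qed
qed

lemma admissible_Init:
  assumes "compatible ov S"
  shows "admissible ov nm A (Init ov nm A S)"
  unfolding Init_eq_Union[OF assms]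
  by (rule admissible_Union_admissible_subsets[OF conflict_free_Init_cands[OF assms]])

lemma Init_cands_subset_Arg_s: "Init_cands ov nm A S \<subseteq> Arg_s ov nm A S"
  unfolding Init_cands_def Arg_s_def Sent_def by blast

lemma admissible_subset_R_S:
  assumes "admissible ov nm A E" and "E \<subseteq> Arg_s ov nm A S"
  shows "E \<subseteq> R_S ov nm A S E"
  using assms unfolding R_S_def admissible_def by blast

lemma Init_subset_R_S:
  assumes "compatible ov S"
  shows "Init ov nm A S \<subseteq> R_S ov nm A S (Init ov nm A S)"
proof (rule admissible_subset_R_S[OF admissible_Init[OF assms]])
  have "Init ov nm A S \<subseteq> Init_cands ov nm A S"
    unfolding Init_eq_Union[OF assms] by blast
  then show "Init ov nm A S \<subseteq> Arg_s ov nm A S"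
    using Init_cands_subset_Arg_s by blast
qed

theorem mainTheorem8:
  fixes L :: "'s set" and ov :: "'s \<Rightarrow> 's set" and nm :: "'s argument \<Rightarrow> 's option"
    and A :: "'s argument set" and S :: "'s set"
  assumes "sbaf L ov nm A"
    and "S \<subseteq> SentS A"
    and "compatible ov S"
  shows "admissible ov nm A (Arg_w ov nm A S)"
proof -
  have "finite A"
    using assms(1) unfolding sbaf_def by blast
  then obtain k where "Arg_w ov nm A S = (R_S ov nm A S ^^ k) (Init ov nm A S)"
    unfolding Arg_w_def
    using the_least_fixpoint_above_eq_funpow[OF mono_R_S _ R_S_subset Init_subset_R_S[OF assms(3)]]
    by blast
  then show ?thesis
    using admissible_funpow_R_S[OF admissible_Init[OF assms(3)] Init_subset_R_S[OF assms(3)]]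
    by simp
qed

end
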